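(* Let $g_0(x) = 3x^2-1$, $g_1(x) = 3x^2-3x+1$, $g_2(x) = 3x^2+3x+1 \in \mathbb{Z}[x]$ and $\Phi_3(x) = x^2+x+1$. Let $q$ be a prime with $q\equiv 1 \pmod 6$, and let $s$ be an integer with $g_1(s)\equiv 0 \pmod q$ or $g_2(s) \equiv 0 \pmod q$. Define \begin{align*} f_9(x) &= 3qx^2+(6s-3)x+g_1(s)/q, & f_{10}(x) &= 3q^2x^2+(6s+3)qx+g_2(s),\\ f_{11}(x) &= 3q^2x^2+(6s-3)qx+g_1(s), & f_{12}(x) &= 3qx^2+(6s+3)x+g_2(s)/q. \end{align*} Then for all $x\in\mathbb{Z}$, \[ \Phi_3(g_0(qx+s)) = \begin{cases} q\,f_9(x)f_{10}(x), & \text{if } q \mid g_1(s),\\ q\,f_{11}(x)f_{12}(x), & \text{if } q \mid g_2(s),\end{cases} \] and (in each case in which they have integer coefficients) the polynomials $f_9, f_{10}, f_{11}, f_{12}$ are irreducible over $\mathbb{Z}$.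
   Context: A polynomial in $\mathbb{Z}[x]$ is called irreducible over $\mathbb{Z}$ if it is not a product of two non-constant polynomials with integer coefficients. *)

theory Defs
  imports "HOL-Computational_Algebra.Polynomial"
begin

definition irreducible_over_Z :: "int poly \<Rightarrow> bool" where
  "irreducible_over_Z p \<longleftrightarrow>
     \<not> (\<exists>a b :: int poly. degree a \<noteq> 0 \<and> degree b \<noteq> 0 \<and> p = a * b)"

definition g0 :: "int poly" where "g0 = [:-1, 0, 3:]"
definition g1 :: "int poly" where "g1 = [:1, -3, 3:]"
definition g2 :: "int poly" where "g2 = [:1, 3, 3:]"
definition Phi3 :: "int poly" where "Phi3 = [:1, 1, 1:]"

definition f9 :: "int \<Rightarrow> int \<Rightarrow> int poly" where
  "f9 q s = [: poly g1 s div q, 6*s - 3, 3*q :]"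
definition f10 :: "int \<Rightarrow> int \<Rightarrow> int poly" where
  "f10 q s = [: poly g2 s, (6*s + 3)*q, 3*q^2 :]"
definition f11 :: "int \<Rightarrow> int \<Rightarrow> int poly" where
  "f11 q s = [: poly g1 s, (6*s - 3)*q, 3*q^2 :]"
definition f12 :: "int \<Rightarrow> int \<Rightarrow> int poly" where
  "f12 q s = [: poly g2 s div q, 6*s + 3, 3*q :]"

end

theory Submission
  imports Defs
begin

(* Substituting y = q x + s into the identity Phi3(g0 y) = g1(y) g2(y) yields the
   factorisation, the factor divisible by q being divided by it.  All four f's are
   integer quadratics of negative discriminant (-3 or -3 q^2, as substitution scales
   the discriminant -3 of g1 and g2 by q^2 and division by q scales it by q^-2), and
   such a quadratic cannot split into two integer linear factors, whose product would
   have a square as discriminant. *)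

lemma degree_one_poly_eq:
  fixes a :: "'a::zero poly"
  assumes "degree a = 1"
  shows "a = [:coeff a 0, coeff a 1:]"
  using assms by (auto simp: poly_eq_iff coeff_pCons split: nat.split intro: coeff_eq_0)

lemma irreducible_over_Z_quadratic:
  fixes A B C :: int
  assumes "A \<noteq> 0" and disc: "B^2 - 4*A*C < 0"
  shows "irreducible_over_Z [:C, B, A:]"
  unfolding irreducible_over_Z_def
proof
  assume "\<exists>a b :: int poly. degree a \<noteq> 0 \<and> degree b \<noteq> 0 \<and> [:C, B, A:] = a * b"
  then obtain a b :: "int poly" where da: "degree a \<noteq> 0" and db: "degree b \<noteq> 0"
    and ab: "[:C, B, A:] = a * b" by blast
  have "a \<noteq> 0" "b \<noteq> 0" using da db by auto
  then have "degree a + degree b = degree [:C, B, A:]" using ab by (simp add: degree_mult_eq)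
  also have "\<dots> = 2" using \<open>A \<noteq> 0\<close> by simp
  finally have "degree a + degree b = 2" .
  then have "degree a = 1" "degree b = 1" using da db by arith+
  then have "[:C, B, A:] = [:coeff a 0, coeff a 1:] * [:coeff b 0, coeff b 1:]"
    using ab degree_one_poly_eq by metis
  then have "C = coeff a 0 * coeff b 0" "B = coeff a 0 * coeff b 1 + coeff a 1 * coeff b 0"
     "A = coeff a 1 * coeff b 1" by (auto simp: algebra_simps)
  then have "B^2 - 4*A*C = (coeff a 0 * coeff b 1 - coeff a 1 * coeff b 0)^2"
    by (simp add: power2_eq_square algebra_simps)
  with disc show False by (metis not_square_less_zero power2_eq_square)
qed

lemma poly_g1: "poly g1 y = 3*y^2 - 3*y + 1"
  by (simp add: g1_def algebra_simps power2_eq_square)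

lemma poly_g2: "poly g2 y = 3*y^2 + 3*y + 1"
  by (simp add: g2_def algebra_simps power2_eq_square)

lemma poly_Phi3_g0: "poly Phi3 (poly g0 y) = poly g1 y * poly g2 y"
  by (simp add: Phi3_def g0_def poly_g1 poly_g2 algebra_simps power2_eq_square)

lemma poly_g1_shift: "poly g1 (q*x + s) = poly (f11 q s) x"
  by (simp add: f11_def poly_g1 algebra_simps power2_eq_square)

lemma poly_g2_shift: "poly g2 (q*x + s) = poly (f10 q s) x"
  by (simp add: f10_def poly_g2 algebra_simps power2_eq_square)

lemma poly_g1_shift_dvd:
  assumes "q dvd poly g1 s"
  shows "poly g1 (q*x + s) = q * poly (f9 q s) x"
  using assms by (cases "q = 0") (auto simp: f9_def poly_g1 algebra_simps power2_eq_square)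

lemma poly_g2_shift_dvd:
  assumes "q dvd poly g2 s"
  shows "poly g2 (q*x + s) = q * poly (f12 q s) x"
  using assms by (cases "q = 0") (auto simp: f12_def poly_g2 algebra_simps power2_eq_square)

lemma irreducible_over_Z_f9:
  assumes "q \<noteq> 0" and "q dvd poly g1 s"
  shows "irreducible_over_Z (f9 q s)"
proof -
  obtain c where c: "poly g1 s = q * c" using assms(2) by blast
  have "(6*s - 3)^2 - 4 * (3*q) * (poly g1 s div q) = -3"
    using c \<open>q \<noteq> 0\<close> by (simp add: poly_g1 algebra_simps power2_eq_square)
  then show ?thesis
    unfolding f9_def using \<open>q \<noteq> 0\<close> by (intro irreducible_over_Z_quadratic) auto
qed

lemma irreducible_over_Z_f12:
  assumes "q \<noteq> 0" and "q dvd poly g2 s"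
  shows "irreducible_over_Z (f12 q s)"
proof -
  obtain c where c: "poly g2 s = q * c" using assms(2) by blast
  have "(6*s + 3)^2 - 4 * (3*q) * (poly g2 s div q) = -3"
    using c \<open>q \<noteq> 0\<close> by (simp add: poly_g2 algebra_simps power2_eq_square)
  then show ?thesis
    unfolding f12_def using \<open>q \<noteq> 0\<close> by (intro irreducible_over_Z_quadratic) auto
qed

lemma irreducible_over_Z_f10:
  assumes "q \<noteq> 0"
  shows "irreducible_over_Z (f10 q s)"
proof -
  have "((6*s + 3)*q)^2 - 4 * (3*q^2) * poly g2 s = -3 * q^2"
    by (simp add: poly_g2 algebra_simps power2_eq_square)
  then show ?thesis
    unfolding f10_def using \<open>q \<noteq> 0\<close> by (intro irreducible_over_Z_quadratic) auto
qed

lemma irreducible_over_Z_f11: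
  assumes "q \<noteq> 0"
  shows "irreducible_over_Z (f11 q s)"
proof -
  have "((6*s - 3)*q)^2 - 4 * (3*q^2) * poly g1 s = -3 * q^2"
    by (simp add: poly_g1 algebra_simps power2_eq_square)
  then show ?thesis
    unfolding f11_def using \<open>q \<noteq> 0\<close> by (intro irreducible_over_Z_quadratic) auto
qed

theorem lemma3:
  fixes q s :: int
  assumes "prime q" and "q mod 6 = 1"
    and "q dvd poly g1 s \<or> q dvd poly g2 s"
  shows "(q dvd poly g1 s \<longrightarrow>
           (\<forall>x::int. poly Phi3 (poly g0 (q*x + s)) = q * poly (f9 q s) x * poly (f10 q s) x)
           \<and> irreducible_over_Z (f9 q s) \<and> irreducible_over_Z (f10 q s))
       \<and> (q dvd poly g2 s \<longrightarrow>
           (\<forall>x::int. poly Phi3 (poly g0 (q*x + s)) = q * poly (f11 q s) x * poly (f12 q s) x)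
           \<and> irreducible_over_Z (f11 q s) \<and> irreducible_over_Z (f12 q s))"
proof -
  have q: "q \<noteq> 0" using \<open>prime q\<close> by auto
  have "poly Phi3 (poly g0 (q*x + s)) = q * poly (f9 q s) x * poly (f10 q s) x"
    if "q dvd poly g1 s" for x
    using that by (simp add: poly_Phi3_g0 poly_g1_shift_dvd poly_g2_shift)
  moreover have "poly Phi3 (poly g0 (q*x + s)) = q * poly (f11 q s) x * poly (f12 q s) x"
    if "q dvd poly g2 s" for x
    using that by (simp add: poly_Phi3_g0 poly_g1_shift poly_g2_shift_dvd)
  ultimately show ?thesis
    using q irreducible_over_Z_f9 irreducible_over_Z_f10 irreducible_over_Z_f11
      irreducible_over_Z_f12 by blast
qed

end
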